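(* Let $d\ge1$ and $m>d/2$, and let $a_1,a_2,a_3>0$. There exist constants $c_1,c_2,c_3,c_4>0$, depending only on $a_1,a_2,a_3,m,d$, such that for all $\lambda>0$, all nonnegative $P,Q,s,t$ and every positive integer $n$: if $$P^2+a_1\lambda Q^2\le a_2s\lambda P+a_3tn^{-1/2}P^{1-\frac{d}{2m}}Q^{\frac{d}{2m}},$$ then $$P\le c_1s\lambda\vee c_2tn^{-1/2}\lambda^{-\frac{d}{4m}},\qquad Q\le c_3s\lambda^{1/2}\vee c_4tn^{-1/2}\lambda^{-\frac{2m+d}{4m}}.$$
   Context: $a\vee b=\max\{a,b\}$. *)

theory Defs
  imports "HOL-Analysis.Analysis"
begin

end

theory Submission
  imports Defs
begin

text \<open>Put \<open>\<theta> = d/(2m) \<in> (0,1)\<close> and \<open>A = a\<^sub>1\<lambda>\<close>. Whichever of the two terms on the right-hand side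
  dominates bounds \<open>P\<^sup>2 + A Q\<^sup>2\<close> alone, up to a factor 2. If it is the linear term \<open>a\<^sub>2 s \<lambda> P\<close>,
  the bounds follow at once. If it is the interpolation term \<open>w X\<close> with \<open>X = P\<^bsup>1-\<theta>\<^esup> Q\<^bsup>\<theta>\<^esup>\<close>, then
  \<open>P\<^sup>2 \<le> w X\<close> and \<open>Q\<^sup>2 \<le> w X / A\<close> give \<open>X\<^sup>2 = (P\<^sup>2)\<^bsup>1-\<theta>\<^esup> (Q\<^sup>2)\<^bsup>\<theta>\<^esup> \<le> w X A\<^bsup>-\<theta>\<^esup>\<close>, so \<open>X \<le> w A\<^bsup>-\<theta>\<^esup>\<close>,
  and substituting back bounds \<open>P\<close> and \<open>Q\<close>.\<close>

lemma quadratic_form_le_linear_bound: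
  fixes A b P Q :: real
  assumes "A > 0" "b \<ge> 0" "P \<ge> 0" "Q \<ge> 0"
    and le: "P\<^sup>2 + A * Q\<^sup>2 \<le> b * P"
  shows "P \<le> b \<and> Q \<le> b / sqrt A"
proof -
  have AQ: "A * Q\<^sup>2 \<ge> 0" using \<open>A > 0\<close> by simp
  have P_le: "P \<le> b"
  proof (cases "P = 0")
    case False
    with \<open>P \<ge> 0\<close> have "P > 0" by simp
    moreover have "P * P \<le> b * P" using le AQ by (simp add: power2_eq_square)
    ultimately show ?thesis by simp
  qed (use \<open>b \<ge> 0\<close> in simp)
  have "A * Q\<^sup>2 \<le> b * b"
    using le AQ mult_left_mono[OF P_le \<open>b \<ge> 0\<close>] by (smt (verit) zero_le_power2)
  then have "Q\<^sup>2 \<le> (b / sqrt A)\<^sup>2"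
    using \<open>A > 0\<close> by (simp add: power_divide power2_eq_square field_simps)
  then have "Q \<le> b / sqrt A"
    by (rule power2_le_imp_le) (use \<open>b \<ge> 0\<close> \<open>A > 0\<close> in simp)
  with P_le show ?thesis ..
qed

lemma quadratic_form_le_interpolation_bound:
  fixes A w P Q \<theta> :: real
  assumes "0 \<le> \<theta>" "\<theta> \<le> 1" "A > 0" "w \<ge> 0" "P \<ge> 0" "Q \<ge> 0"
    and le: "P\<^sup>2 + A * Q\<^sup>2 \<le> w * (P powr (1 - \<theta>) * Q powr \<theta>)"
  shows "P \<le> w * A powr (- \<theta> / 2) \<and> Q \<le> w * A powr (- (1 + \<theta>) / 2)"
proof -
  define X where "X = P powr (1 - \<theta>) * Q powr \<theta>"
  have "X \<ge> 0" by (simp add: X_def)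
  have P2: "P\<^sup>2 \<le> w * X" and Q2: "Q\<^sup>2 \<le> w * X / A"
    using le \<open>A > 0\<close> zero_le_power2[of P] zero_le_power2[of Q]
    by (auto simp: X_def field_simps intro: order_trans[rotated])
  have "X\<^sup>2 = (P\<^sup>2) powr (1 - \<theta>) * (Q\<^sup>2) powr \<theta>"
    by (simp add: X_def power_mult_distrib power2_eq_square powr_mult)
  also have "\<dots> \<le> (w * X) powr (1 - \<theta>) * (w * X / A) powr \<theta>"
    using P2 Q2 \<open>0 \<le> \<theta>\<close> \<open>\<theta> \<le> 1\<close> by (intro mult_mono powr_mono2) auto
  also have "\<dots> = (w * A powr (- \<theta>)) * X"
    using \<open>w \<ge> 0\<close> \<open>X \<ge> 0\<close>
    by (simp add: powr_divide powr_minus_divide powr_add[symmetric])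
  finally have X_le: "X \<le> w * A powr (- \<theta>)"
    using \<open>X \<ge> 0\<close> \<open>w \<ge> 0\<close> by (cases "X = 0") (auto simp: power2_eq_square)
  have "P\<^sup>2 \<le> w * (w * A powr (- \<theta>))"
    using P2 mult_left_mono[OF X_le \<open>w \<ge> 0\<close>] by linarith
  also have "\<dots> = (w * A powr (- \<theta> / 2))\<^sup>2"
    by (simp add: power2_eq_square powr_add[symmetric])
  finally have "P\<^sup>2 \<le> (w * A powr (- \<theta> / 2))\<^sup>2" .
  moreover have "Q\<^sup>2 \<le> (w * A powr (- (1 + \<theta>) / 2))\<^sup>2"
  proof -
    have "w * X / A \<le> w * (w * A powr (- \<theta>)) / A"
      using X_le \<open>w \<ge> 0\<close> \<open>A > 0\<close> by (simp add: divide_right_mono mult_left_mono)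
    also have "\<dots> = w\<^sup>2 * (A powr (- \<theta>) * A powr (- 1))"
      using \<open>A > 0\<close> by (simp add: power2_eq_square powr_minus_divide)
    also have "\<dots> = w\<^sup>2 * (A powr (- (1 + \<theta>) / 2) * A powr (- (1 + \<theta>) / 2))"
      unfolding powr_add[symmetric] by (rule arg_cong[where f = "\<lambda>e. w\<^sup>2 * A powr e"]) simp
    also have "\<dots> = (w * A powr (- (1 + \<theta>) / 2))\<^sup>2"
      by (simp add: power2_eq_square)
    finally show ?thesis using Q2 by linarith
  qed
  ultimately show ?thesis
    using \<open>w \<ge> 0\<close> by (auto intro: power2_le_imp_le)
qed

lemma quadratic_form_le_sum_bound:
  fixes A b w P Q \<theta> :: real
  assumes "0 \<le> \<theta>" "\<theta> \<le> 1" "A > 0" "b \<ge> 0" "w \<ge> 0" "P \<ge> 0" "Q \<ge> 0"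
    and le: "P\<^sup>2 + A * Q\<^sup>2 \<le> b * P + w * (P powr (1 - \<theta>) * Q powr \<theta>)"
  shows "P \<le> max (2 * b) (2 * w * A powr (- \<theta> / 2))
    \<and> Q \<le> max (2 * b / sqrt A) (2 * w * A powr (- (1 + \<theta>) / 2))"
proof (cases "w * (P powr (1 - \<theta>) * Q powr \<theta>) \<le> b * P")
  case True
  with le have "P\<^sup>2 + A * Q\<^sup>2 \<le> (2 * b) * P" by simp
  with assms have "P \<le> 2 * b \<and> Q \<le> 2 * b / sqrt A"
    by (intro quadratic_form_le_linear_bound) auto
  then show ?thesis by auto
next
  case False
  with le have "P\<^sup>2 + A * Q\<^sup>2 \<le> (2 * w) * (P powr (1 - \<theta>) * Q powr \<theta>)" by simp
  with assms have "P \<le> 2 * w * A powr (- \<theta> / 2) \<and> Q \<le> 2 * w * A powr (- (1 + \<theta>) / 2)"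
    by (intro quadratic_form_le_interpolation_bound) auto
  then show ?thesis by auto
qed

lemma quadratic_form_le_scaled_bound:
  fixes a1 a2 a3 \<theta> lam P Q s u :: real
  assumes "0 \<le> \<theta>" "\<theta> \<le> 1" "a1 > 0" "a2 \<ge> 0" "a3 \<ge> 0"
    and "lam > 0" "P \<ge> 0" "Q \<ge> 0" "s \<ge> 0" "u \<ge> 0"
    and le: "P\<^sup>2 + a1 * lam * Q\<^sup>2 \<le> a2 * s * lam * P + a3 * u * P powr (1 - \<theta>) * Q powr \<theta>"
  shows "P \<le> max (2 * a2 * s * lam) (2 * a3 * a1 powr (- \<theta> / 2) * u * lam powr (- \<theta> / 2))
    \<and> Q \<le> max (2 * a2 / sqrt a1 * s * lam powr (1/2))
               (2 * a3 * a1 powr (- (1 + \<theta>) / 2) * u * lam powr (- (1 + \<theta>) / 2))"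
proof -
  have rescale: "2 * (a2 * s * lam) = 2 * a2 * s * lam"
    "2 * a2 * s * lam / sqrt (a1 * lam) = 2 * a2 / sqrt a1 * s * lam powr (1/2)"
    "2 * (a3 * u) * (a1 * lam) powr (- \<theta> / 2) = 2 * a3 * a1 powr (- \<theta> / 2) * u * lam powr (- \<theta> / 2)"
    "2 * (a3 * u) * (a1 * lam) powr (- (1 + \<theta>) / 2)
      = 2 * a3 * a1 powr (- (1 + \<theta>) / 2) * u * lam powr (- (1 + \<theta>) / 2)"
    using \<open>lam > 0\<close> \<open>a1 > 0\<close>
    by (simp_all add: powr_mult powr_half_sqrt real_sqrt_mult field_simps)
  have "P\<^sup>2 + (a1 * lam) * Q\<^sup>2 \<le> (a2 * s * lam) * P + (a3 * u) * (P powr (1 - \<theta>) * Q powr \<theta>)"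
    using le by (simp only: mult.assoc)
  with assms have "P \<le> max (2 * (a2 * s * lam)) (2 * (a3 * u) * (a1 * lam) powr (- \<theta> / 2))
    \<and> Q \<le> max (2 * (a2 * s * lam) / sqrt (a1 * lam)) (2 * (a3 * u) * (a1 * lam) powr (- (1 + \<theta>) / 2))"
    by (intro quadratic_form_le_sum_bound) auto
  then show ?thesis
    unfolding rescale .
qed

theorem lemmaA2:
  fixes d :: nat and m a1 a2 a3 :: real
  assumes "d \<ge> 1" and "m > real d / 2"
    and "a1 > 0" and "a2 > 0" and "a3 > 0"
  shows "\<exists>c1 c2 c3 c4 :: real. c1 > 0 \<and> c2 > 0 \<and> c3 > 0 \<and> c4 > 0 \<and>
    (\<forall>lam P Q s t :: real. \<forall>n :: nat.
      lam > 0 \<longrightarrow> P \<ge> 0 \<longrightarrow> Q \<ge> 0 \<longrightarrow> s \<ge> 0 \<longrightarrow> t \<ge> 0 \<longrightarrow> n \<ge> 1 \<longrightarrow>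
      P\<^sup>2 + a1 * lam * Q\<^sup>2 \<le> a2 * s * lam * P
          + a3 * t * real n powr (-1/2) * P powr (1 - real d / (2 * m)) * Q powr (real d / (2 * m))
      \<longrightarrow> P \<le> max (c1 * s * lam) (c2 * t * real n powr (-1/2) * lam powr (- real d / (4 * m)))
        \<and> Q \<le> max (c3 * s * lam powr (1/2))
                   (c4 * t * real n powr (-1/2) * lam powr (- (2 * m + real d) / (4 * m))))"
proof -
  define \<theta> where "\<theta> = real d / (2 * m)"
  have "m > 0" using assms(1,2) by simp
  then have \<theta>: "0 \<le> \<theta>" "\<theta> \<le> 1" using assms(2) by (auto simp: \<theta>_def field_simps)
  have exponents: "- \<theta> / 2 = - real d / (4 * m)" "- (1 + \<theta>) / 2 = - (2 * m + real d) / (4 * m)"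
    using \<open>m > 0\<close> by (auto simp: \<theta>_def field_simps)
  define c1 c2 c3 c4 where "c1 = 2 * a2" and "c2 = 2 * a3 * a1 powr (- \<theta> / 2)"
    and "c3 = 2 * a2 / sqrt a1" and "c4 = 2 * a3 * a1 powr (- (1 + \<theta>) / 2)"
  have pos: "c1 > 0" "c2 > 0" "c3 > 0" "c4 > 0"
    using assms by (simp_all add: c1_def c2_def c3_def c4_def)
  have bound: "P \<le> max (c1 * s * lam) (c2 * t * real n powr (-1/2) * lam powr (- \<theta> / 2))
      \<and> Q \<le> max (c3 * s * lam powr (1/2))
        (c4 * t * real n powr (-1/2) * lam powr (- (1 + \<theta>) / 2))"
    if "lam > 0" "P \<ge> 0" "Q \<ge> 0" "s \<ge> 0" "t \<ge> 0"
      and "P\<^sup>2 + a1 * lam * Q\<^sup>2 \<le> a2 * s * lam * P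
        + a3 * t * real n powr (-1/2) * P powr (1 - \<theta>) * Q powr \<theta>"
    for lam P Q s t :: real and n :: nat
    using quadratic_form_le_scaled_bound[OF \<theta> \<open>a1 > 0\<close>, of a2 a3 lam P Q s "t * real n powr (-1/2)"]
      that assms(4,5)
    unfolding c1_def c2_def c3_def c4_def by (simp add: mult.assoc)
  show ?thesis
    unfolding \<theta>_def[symmetric] exponents[symmetric]
    by (rule exI[of _ c1], rule exI[of _ c2], rule exI[of _ c3], rule exI[of _ c4])
      (intro conjI pos allI impI; rule bound[THEN conjunct1] bound[THEN conjunct2]; assumption)
qed

end
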